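(* Let $P$ be as in the context. For $v\in\mathbb C^n$ let $f^v=(h^v,g^v)$ be the disc defined in the context. Then the set $\bigcup_{v\in\mathbb C^n}f^v(\Delta)$ contains a nonempty open subset of $\mathbb C^{n+1}$.
   Context: $\Delta$ is the open unit disc and $b\Delta$ the unit circle. $M=(m_1,\dots,m_n)$ is a vector of positive integers, and $M\cdot J=\sum m_ij_i$. $P:\mathbb C^n\to\mathbb R$ is a real polynomial with $P(t^{m_1}z_1,\dots,t^{m_n}z_n,t^{m_1}\bar z_1,\dots)=t^dP(z,\bar z)$ for real $t$. Write $P=\sum_{M\cdot J+M\cdot K=d}\alpha_{JK}z^J\bar z^K$, with $P\not\equiv0$ and $\alpha_{JK}=0$ if $J=0$ or $K=0$. $k_0$ is the largest $k$ with $d/2\le k\le d-1$ such that $\alpha_{JK}\ne0$ for some $M\cdot K=k$. The model is $S_P=\{\mathrm{Re}\,w=P(z,\bar z)\}$. For $v\in\mathbb C^n$ let $h^v(\zeta)=((1-\zeta)^{m_1}v_1,\dots,(1-\zeta)^{m_n}v_n)$. Let $g^v$ be the holomorphic polynomial in $\zeta$ with $g^v(1)=0$ and $\mathrm{Re}\,g^v(\zeta)=P(h^v(\zeta),\overline{h^v(\zeta)})$ for $\zeta\in b\Delta$. Set $f^v=(h^v,g^v)$, a holomorphic disc with $f^v(b\Delta)\subset S_P$ and $f^v(1)=0$. *)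

theory Defs
  imports "HOL-Analysis.Analysis" "HOL-Computational_Algebra.Polynomial"
begin

definition wdeg :: "('n::finite \<Rightarrow> nat) \<Rightarrow> ('n \<Rightarrow> nat) \<Rightarrow> nat" where
  "wdeg M J = (\<Sum>i\<in>UNIV. M i * J i)"

definition mono :: "complex^'n::finite \<Rightarrow> ('n \<Rightarrow> nat) \<Rightarrow> complex" where
  "mono z J = (\<Prod>i\<in>UNIV. (z$i) ^ (J i))"

definition modelP :: "('n::finite \<Rightarrow> nat) \<Rightarrow> nat \<Rightarrow> (('n \<Rightarrow> nat) \<Rightarrow> ('n \<Rightarrow> nat) \<Rightarrow> complex)
    \<Rightarrow> complex^'n \<Rightarrow> complex" where
  "modelP M d \<alpha> z = (\<Sum>(J,K)\<in>{(J,K). wdeg M J + wdeg M K = d}.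
       \<alpha> J K * mono z J * mono (\<chi> i. cnj (z$i)) K)"

definition hdisc :: "('n::finite \<Rightarrow> nat) \<Rightarrow> complex^'n \<Rightarrow> complex \<Rightarrow> complex^'n" where
  "hdisc M v \<zeta> = (\<chi> i. (1 - \<zeta>) ^ (M i) * v$i)"

end

theory Submission
  imports Defs "HOL-Complex_Analysis.Complex_Analysis"
begin

no_notation fps_nth (infixl \<open>$\<close> 75)

text \<open>The map \<open>(v, \<zeta>) \<mapsto> (h\<^sup>v(\<zeta>), g\<^sup>v(\<zeta>))\<close> is smooth on \<open>\<complex>\<^sup>n \<times> \<Delta>\<close>, so it suffices to find a
  point where its real derivative is onto. Write \<open>P = \<Sum>\<^sub>k T\<^sub>k\<close> with \<open>T\<^sub>k\<close> of bidegree \<open>(d - k, k)\<close>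
  and put \<open>S\<^sub>k = T\<^sub>k + conj T\<^bsub>d-k\<^esub>\<close>. Then \<open>g\<^sup>v(\<zeta>) = \<Sum>\<^sub>k S\<^sub>k(v) (H\<^sub>k(\<zeta>) - H\<^sub>k(1))\<close>, where \<open>H\<^sub>k\<close>
  is the part of nonnegative frequency of \<open>(1 - \<zeta>)\<^sup>d\<^sup>-\<^sup>k conj(1 - \<zeta>)\<^sup>k\<close> on the circle: both sides
  are holomorphic, vanish at \<open>1\<close> and have the same real part on the circle.
  At \<open>(v, 0)\<close>, moving \<open>\<zeta>\<close> by \<open>e\<close> while rotating \<open>v\<close> by \<open>exp(e)\<^sup>M\<close> leaves \<open>h\<close> fixed to first
  order and moves \<open>g\<close> by \<open>X e + Y conj e\<close>, where \<open>X = \<Sum>\<^sub>k k C(d-1, k+1) S\<^sub>k(v)\<close> and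
  \<open>Y = \<Sum>\<^sub>k k C(d-1, k) S\<^sub>k(v)\<close>; so the derivative is onto as soon as \<open>\<bar>X\<bar> \<noteq> \<bar>Y\<bar>\<close>.
  Rotating \<open>v\<close> by unit scalars turns \<open>X\<close> and \<open>Y\<close> into polynomials on the unit circle. If their
  moduli always agreed, the products of their extreme coefficients would agree, which the strict
  log-concavity of the binomial coefficients rules out.\<close>

section \<open>Derivatives, open mappings and holomorphic functions\<close>

lemma has_derivative_vec_lambda:
  fixes f :: "'i::finite \<Rightarrow> 'a::euclidean_space \<Rightarrow> 'b::real_normed_vector"
  assumes "\<And>i. (f i has_derivative f' i) F"
  shows "((\<lambda>x. \<chi> i. f i x) has_derivative (\<lambda>h. \<chi> i. f' i h)) F"
  unfolding has_derivative_def
proof (intro conjI)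
  have "linear (\<lambda>h. \<chi> i. f' i h)"
    using assms by (intro linearI) (simp_all add: vec_eq_iff has_derivative_def linear_add
        linear_scale bounded_linear.linear)
  then show "bounded_linear (\<lambda>h. \<chi> i. f' i h)"
    by (simp add: linear_conv_bounded_linear)
  let ?L = "Lim F (\<lambda>x. x)"
  have "((\<lambda>y. \<chi> i. ((f i y - f i ?L) - f' i (y - ?L)) /\<^sub>R norm (y - ?L)) \<longlongrightarrow> (\<chi> i. 0)) F"
    by (rule tendsto_vec_lambda) (use assms in \<open>simp add: has_derivative_def\<close>)
  moreover have "(\<lambda>y. \<chi> i. ((f i y - f i ?L) - f' i (y - ?L)) /\<^sub>R norm (y - ?L))
      = (\<lambda>y. (((\<chi> i. f i y) - (\<chi> i. f i ?L)) - (\<chi> i. f' i (y - ?L))) /\<^sub>R norm (y - ?L))"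
    by (simp add: vec_eq_iff fun_eq_iff)
  ultimately show "((\<lambda>y. (((\<chi> i. f i y) - (\<chi> i. f i ?L)) - (\<chi> i. f' i (y - ?L))) /\<^sub>R norm (y - ?L))
      \<longlongrightarrow> 0) F"
    by (simp add: zero_vec_def)
qed

lemma has_derivative_vec_nth [derivative_intros]:
  "(f has_derivative f') F \<Longrightarrow> ((\<lambda>x. f x $ i) has_derivative (\<lambda>x. f' x $ i)) F"
  using bounded_linear.has_derivative[OF bounded_linear_vec_nth] .

lemma has_vector_derivative_vec_lambda:
  fixes f :: "'i::finite \<Rightarrow> real \<Rightarrow> 'b::real_normed_vector"
  assumes "\<And>i. (f i has_vector_derivative f' i) F"
  shows "((\<lambda>x. \<chi> i. f i x) has_vector_derivative (\<chi> i. f' i)) F"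
proof -
  have "((\<lambda>x. \<chi> i. f i x) has_derivative (\<lambda>h. \<chi> i. h *\<^sub>R f' i)) F"
    using assms by (intro has_derivative_vec_lambda) (simp add: has_vector_derivative_def)
  moreover have "(\<lambda>h. \<chi> i. h *\<^sub>R f' i) = (\<lambda>h. h *\<^sub>R (\<chi> i. f' i))"
    by (simp add: fun_eq_iff vec_eq_iff)
  ultimately show ?thesis
    by (simp add: has_vector_derivative_def)
qed

lemma has_derivative_along_curve:
  fixes \<Phi> :: "'a::real_normed_vector \<Rightarrow> 'b::real_normed_vector" and \<gamma> :: "real \<Rightarrow> 'a"
  assumes \<Phi>: "(\<Phi> has_derivative \<Phi>') (at (\<gamma> 0))"
    and \<gamma>: "(\<gamma> has_vector_derivative w) (at 0)"
    and \<Phi>\<gamma>: "((\<Phi> \<circ> \<gamma>) has_vector_derivative c) (at 0)"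
  shows "\<Phi>' w = c"
proof -
  have "((\<Phi> \<circ> \<gamma>) has_derivative (\<lambda>s. \<Phi>' (s *\<^sub>R w))) (at 0)"
    using has_derivative_compose[OF \<gamma>[unfolded has_vector_derivative_def] \<Phi>] by (simp add: o_def)
  then have "((\<Phi> \<circ> \<gamma>) has_vector_derivative \<Phi>' w) (at 0)"
    using linear_scale[OF has_derivative_linear[OF \<Phi>]] by (simp add: has_vector_derivative_def)
  then show ?thesis
    using \<Phi>\<gamma> by (rule vector_derivative_unique_at)
qed

lemma interior_image_surj_derivative:
  fixes f :: "'a::euclidean_space \<Rightarrow> 'b::euclidean_space"
  assumes "continuous_on UNIV f" and f': "(f has_derivative f') (at x)" and "surj f'"
    and "x \<in> interior T"
  shows "f x \<in> interior (f ` T)"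
proof -
  obtain g' where "linear g'" "f' \<circ> g' = id"
    using real_vector.linear_surjective_right_inverse has_derivative_linear[OF f'] \<open>surj f'\<close>
    by blast
  then show ?thesis
    using sussmann_open_mapping[OF open_UNIV assms(1) UNIV_I f'] assms(4)
    by (simp add: linear_conv_bounded_linear)
qed

lemma holomorphic_Re_zero_imp_constant:
  assumes "f holomorphic_on S" "open S" "connected S" "\<And>z. z \<in> S \<Longrightarrow> Re (f z) = 0"
  shows "f constant_on S"
proof (rule ccontr)
  assume "\<not> f constant_on S"
  then have "open (f ` S)"
    using assms by (intro open_mapping_thm[of f S S]) auto
  moreover have "S \<noteq> {}"
    using \<open>\<not> f constant_on S\<close> by (auto simp: constant_on_def)
  then obtain z where "z \<in> S" by blast
  ultimately obtain e where "e > 0" "ball (f z) e \<subseteq> f ` S"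
    by (meson imageI open_contains_ball)
  then have "f z + of_real (e / 2) \<in> f ` S"
    by (auto simp: dist_norm)
  then obtain x where "x \<in> S" "f x = f z + of_real (e / 2)"
    by (metis imageE)
  then have "Re (f x) = Re (f z) + e / 2"
    by simp
  then show False
    using assms(4) \<open>x \<in> S\<close> \<open>z \<in> S\<close> \<open>e > 0\<close> by simp
qed

lemma holomorphic_Re_zero_on_circle_imp_zero:
  fixes p :: "complex \<Rightarrow> complex"
  assumes hol: "p holomorphic_on UNIV" and Re0: "\<And>z. norm z = 1 \<Longrightarrow> Re (p z) = 0"
    and "p 1 = 0" and z: "z \<in> ball 0 1"
  shows "p z = 0"
proof -
  have Re_le: "Re (q w) \<le> 0"
    if "q holomorphic_on UNIV" "\<And>z. norm z = 1 \<Longrightarrow> Re (q z) \<le> 0" "w \<in> ball 0 1"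
    for q :: "complex \<Rightarrow> complex" and w
  proof (rule maximum_real_frontier[of q "ball 0 1"])
    show "q holomorphic_on interior (ball 0 1)"
      using that(1) by (rule holomorphic_on_subset) simp
    show "continuous_on (closure (ball 0 1)) q"
      using holomorphic_on_imp_continuous_on[OF that(1)] by (rule continuous_on_subset) simp
  qed (use that in \<open>simp_all\<close>)
  have Re_ball: "Re (p w) = 0" if "w \<in> ball 0 1" for w
    using Re_le[of p w] Re_le[of "\<lambda>z. - p z" w] hol Re0 that
    by (simp add: holomorphic_on_minus)
  moreover have "p holomorphic_on ball 0 1"
    using hol by (rule holomorphic_on_subset) simp
  ultimately obtain c where c: "\<And>w. w \<in> ball 0 1 \<Longrightarrow> p w = c"
    using holomorphic_Re_zero_imp_constant[of p "ball 0 1"]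
    by (auto simp: constant_on_def convex_connected)
  have "p 1 = c"
  proof (rule continuous_constant_on_closure[of "ball 0 1" p])
    show "continuous_on (closure (ball 0 1)) p"
      using holomorphic_on_imp_continuous_on[OF hol] by (rule continuous_on_subset) simp
  qed (use c in simp_all)
  with c z \<open>p 1 = 0\<close> show ?thesis by simp
qed

section \<open>Polynomials and binomial coefficients on the unit circle\<close>

lemma finite_zeros_sum_powers_isolated:
  fixes w :: "'a \<Rightarrow> complex" and e :: "'a \<Rightarrow> nat"
  assumes "finite I" "x0 \<in> I" "w x0 \<noteq> 0"
    and isolated: "\<And>x. x \<in> I \<Longrightarrow> w x \<noteq> 0 \<Longrightarrow> e x = e x0 \<Longrightarrow> x = x0"
  shows "finite {z. (\<Sum>x\<in>I. w x * z ^ e x) = 0}"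
proof -
  define N where "N = Max (e ` I)"
  define c where "c i = (\<Sum>x\<in>{x\<in>I. e x = i}. w x)" for i
  have "(\<Sum>x\<in>I. w x * z ^ e x) = (\<Sum>i\<le>N. c i * z ^ i)" for z
  proof -
    have "(\<Sum>x\<in>I. w x * z ^ e x) = (\<Sum>i\<le>N. \<Sum>x\<in>{x\<in>I. e x = i}. w x * z ^ e x)"
      using \<open>finite I\<close> by (intro sum.group[symmetric]) (auto simp: N_def)
    then show ?thesis
      by (simp add: c_def sum_distrib_right)
  qed
  moreover have "c (e x0) = w x0"
    unfolding c_def using \<open>finite I\<close> \<open>x0 \<in> I\<close> isolated
    by (subst sum.remove[of _ x0]) (auto intro!: sum.neutral)
  moreover have "e x0 \<le> N"
    using \<open>finite I\<close> \<open>x0 \<in> I\<close> by (simp add: N_def)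
  ultimately show ?thesis
    using polyfun_finite_roots[of c N] \<open>w x0 \<noteq> 0\<close> by auto
qed

lemma infinite_unit_circle: "infinite (sphere (0::complex) 1)"
proof
  assume "finite (sphere (0::complex) 1)"
  moreover have "connected (sphere (0::complex) 1)"
    by (rule connected_sphere) simp
  ultimately have "sphere (0::complex) 1 = {} \<or> (\<exists>a. sphere (0::complex) 1 = {a})"
    using connected_finite_iff_sing by blast
  moreover have "1 \<in> sphere (0::complex) 1" "-1 \<in> sphere (0::complex) 1"
    by auto
  ultimately show False
    by (metis empty_iff one_neq_neg_one singletonD)
qed

lemma unit_circle_cnj_power:
  fixes z :: complex
  assumes "norm z = 1" "k \<le> N"
  shows "z ^ N * cnj z ^ k = z ^ (N - k)"
proof -
  have "z ^ N * cnj z ^ k = z ^ (N - k) * (z * cnj z) ^ k"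
    using \<open>k \<le> N\<close> by (simp add: power_mult_distrib power_add[symmetric])
  also have "z * cnj z = 1"
    using \<open>norm z = 1\<close> by (simp add: complex_norm_square[symmetric])
  finally show ?thesis by simp
qed

lemma sum_times_cnj_on_circle:
  fixes c :: "nat \<Rightarrow> complex"
  assumes "norm z = 1"
  shows "z ^ N * ((\<Sum>k\<le>N. c k * z ^ k) * cnj (\<Sum>k\<le>N. c k * z ^ k))
    = (\<Sum>x\<in>{..N} \<times> {..N}. c (fst x) * cnj (c (snd x)) * z ^ (fst x + N - snd x))"
proof -
  have "z ^ N * cnj (\<Sum>k\<le>N. c k * z ^ k) = (\<Sum>j\<le>N. cnj (c j) * z ^ (N - j))"
    unfolding cnj_sum sum_distrib_left
    by (intro sum.cong refl) (simp add: unit_circle_cnj_power[OF assms] mult_ac)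
  then have "z ^ N * ((\<Sum>k\<le>N. c k * z ^ k) * cnj (\<Sum>k\<le>N. c k * z ^ k))
      = (\<Sum>k\<le>N. c k * z ^ k) * (\<Sum>j\<le>N. cnj (c j) * z ^ (N - j))"
    by (simp add: mult_ac)
  also have "\<dots> = (\<Sum>k\<le>N. \<Sum>j\<le>N. c k * cnj (c j) * z ^ (k + N - j))"
    unfolding sum_product by (intro sum.cong refl) (simp add: power_add[symmetric] mult_ac)
  finally show ?thesis
    by (simp add: sum.cartesian_product case_prod_beta)
qed

text \<open>\<open>z\<^sup>N (\<bar>A z\<bar>\<^sup>2 - \<bar>B z\<bar>\<^sup>2)\<close> is a polynomial vanishing on the circle, and the support
  hypothesis isolates its coefficient of \<open>z ^ (m + N - l)\<close>, namely
  \<open>a m * cnj (a l) - b m * cnj (b l)\<close>.\<close>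
lemma extreme_coeffs_eq_if_norms_eq_on_circle:
  fixes a b :: "nat \<Rightarrow> complex"
  assumes norms: "\<And>z. norm z = 1 \<Longrightarrow> norm (\<Sum>k\<le>N. a k * z ^ k) = norm (\<Sum>k\<le>N. b k * z ^ k)"
    and "l \<le> N" "m \<le> N"
    and supp: "\<And>k. k \<le> N \<Longrightarrow> a k \<noteq> 0 \<or> b k \<noteq> 0 \<Longrightarrow> l \<le> k \<and> k \<le> m"
  shows "a m * cnj (a l) = b m * cnj (b l)"
proof (rule ccontr)
  assume ne: "a m * cnj (a l) \<noteq> b m * cnj (b l)"
  define w where "w x = a (fst x) * cnj (a (snd x)) - b (fst x) * cnj (b (snd x))" for x
  define e where "e x = fst x + N - snd x" for x
  have "sphere 0 1 \<subseteq> {z. (\<Sum>x\<in>{..N} \<times> {..N}. w x * z ^ e x) = 0}"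
  proof
    fix z :: complex assume "z \<in> sphere 0 1"
    then have z: "norm z = 1" by simp
    let ?A = "\<Sum>k\<le>N. a k * z ^ k" and ?B = "\<Sum>k\<le>N. b k * z ^ k"
    have "?A * cnj ?A = ?B * cnj ?B"
      using norms[OF z] by (metis complex_norm_square)
    then have "z ^ N * (?A * cnj ?A) - z ^ N * (?B * cnj ?B) = 0"
      by simp
    then show "z \<in> {z. (\<Sum>x\<in>{..N} \<times> {..N}. w x * z ^ e x) = 0}"
      unfolding sum_times_cnj_on_circle[OF z] by (simp add: w_def e_def algebra_simps sum_subtractf)
  qed
  moreover have "finite {z. (\<Sum>x\<in>{..N} \<times> {..N}. w x * z ^ e x) = 0}"
  proof (rule finite_zeros_sum_powers_isolated)
    show "(m, l) \<in> {..N} \<times> {..N}" "w (m, l) \<noteq> 0"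
      using \<open>l \<le> N\<close> \<open>m \<le> N\<close> ne by (auto simp: w_def)
    fix x assume x: "x \<in> {..N} \<times> {..N}" "w x \<noteq> 0" "e x = e (m, l)"
    then have "a (fst x) \<noteq> 0 \<or> b (fst x) \<noteq> 0" "a (snd x) \<noteq> 0 \<or> b (snd x) \<noteq> 0"
      by (auto simp: w_def)
    then have "fst x \<le> m" "l \<le> snd x"
      using supp[of "fst x"] supp[of "snd x"] x(1) by auto
    with x \<open>l \<le> N\<close> show "x = (m, l)"
      by (cases x) (auto simp: e_def)
  qed simp
  ultimately show False
    using infinite_unit_circle finite_subset by blast
qed

lemma conj_linear_surj:
  fixes X Y b :: complex
  assumes "norm X \<noteq> norm Y"
  shows "\<exists>e. X * e + Y * cnj e = b"
proof -
  define R where "R = (norm X)\<^sup>2 - (norm Y)\<^sup>2"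
  have "R \<noteq> 0"
    using assms by (simp add: R_def)
  have "X * cnj X - Y * cnj Y = of_real R"
    by (simp only: R_def of_real_diff complex_norm_square)
  define u where "u = cnj X * b - Y * cnj b"
  have "X * (u / of_real R) + Y * cnj (u / of_real R) = (X * u + Y * cnj u) / of_real R"
    by (simp add: add_divide_distrib)
  also have "X * u + Y * cnj u = (X * cnj X - Y * cnj Y) * b"
    by (simp add: u_def algebra_simps)
  finally have "X * (u / of_real R) + Y * cnj (u / of_real R) = b"
    using \<open>X * cnj X - Y * cnj Y = of_real R\<close> \<open>R \<noteq> 0\<close> by simp
  then show ?thesis ..
qed

lemma binomial_absorption_comp: "Suc k * (n choose Suc k) = (n - k) * (n choose k)"
  by (simp only: binomial_absorption binomial_absorb_comp)

lemma binomial_product_decreasing: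
  assumes "1 \<le> k" "k \<le> n"
  shows "(n choose Suc k) * (n choose Suc (Suc n - k)) < (n choose k) * (n choose (Suc n - k))"
proof -
  define j where "j = Suc n - k"
  have "0 < (n choose k) * (n choose j)"
    using assms by (simp add: j_def)
  moreover have "(n - k) * (k - 1) < Suc k * Suc j"
  proof -
    have "(n - k) * (k - 1) \<le> Suc j * (k - 1)"
      using assms by (intro mult_le_mono1) (simp add: j_def)
    also have "\<dots> < Suc j * Suc k"
      by (rule mult_less_mono2) simp_all
    finally show ?thesis by (simp add: mult.commute)
  qed
  moreover have "((n - k) * (k - 1)) * ((n choose k) * (n choose j))
      = (Suc k * Suc j) * ((n choose Suc k) * (n choose Suc j))"
  proof -
    have "n - j = k - 1"
      using assms by (simp add: j_def)
    then have "((n - k) * (k - 1)) * ((n choose k) * (n choose j))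
        = ((n - k) * (n choose k)) * ((n - j) * (n choose j))"
      by (simp only: mult_ac)
    also have "\<dots> = (Suc k * (n choose Suc k)) * (Suc j * (n choose Suc j))"
      by (simp only: binomial_absorption_comp)
    finally show ?thesis by (simp only: mult_ac)
  qed
  ultimately have "(Suc k * Suc j) * ((n choose Suc k) * (n choose Suc j))
      < (Suc k * Suc j) * ((n choose k) * (n choose j))"
    by (metis mult_strict_right_mono)
  then show ?thesis
    unfolding j_def using Nat.mult_less_cancel1 by blast
qed

lemma sum_atMost_around:
  fixes f :: "nat \<Rightarrow> 'a::comm_monoid_add"
  assumes "k \<le> d"
  shows "(\<Sum>j\<le>d. f j) + f k = (\<Sum>i\<le>d - k. f (k + i)) + (\<Sum>i\<le>k. f (k - i))"
proof -
  have "{..d} = {..<k} \<union> {k..d}" "{..k} = {..<k} \<union> {k}"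
    using assms by auto
  then have "(\<Sum>j\<le>d. f j) + f k = (\<Sum>j\<in>{k..d}. f j) + (\<Sum>j\<le>k. f j)"
    by (simp add: sum.union_disjoint ivl_disj_int ac_simps)
  also have "(\<Sum>j\<in>{k..d}. f j) = (\<Sum>i\<le>d - k. f (k + i))"
    using assms by (simp add: sum.atLeastAtMost_shift_0 atLeast0AtMost o_def)
  also have "(\<Sum>j\<le>k. f j) = (\<Sum>i\<le>k. f (k - i))"
    using sum.atLeastAtMost_rev[of f 0 k] by (simp add: atLeast0AtMost)
  finally show ?thesis .
qed

text \<open>On the unit circle \<open>(1 - z)\<^sup>d\<^sup>-\<^sup>k cnj (1 - z)\<^sup>k = (-1)\<^sup>k (1 - z)\<^sup>d z\<^sup>-\<^sup>k\<close>;
  \<open>hol_part d k\<close> is its part of nonnegative frequency, see \<open>hol_part_circle\<close>.\<close>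
definition hol_part :: "nat \<Rightarrow> nat \<Rightarrow> complex \<Rightarrow> complex" where
  "hol_part d k z = (\<Sum>i\<le>d - k. (-1) ^ i * of_nat (d choose (k + i)) * z ^ i)"

lemma one_minus_power_cnj_on_circle:
  assumes "norm z = 1" "k \<le> d"
  shows "(1 - z) ^ (d - k) * cnj (1 - z) ^ k
    = (\<Sum>j\<le>d. (-1) ^ (k + j) * of_nat (d choose j) * (z ^ j * cnj z ^ k))"
proof -
  have "z * cnj z = 1"
    using assms(1) by (simp add: complex_norm_square[symmetric])
  then have "cnj (1 - z) = - ((1 - z) * cnj z)"
    by (simp add: algebra_simps)
  then have "(1 - z) ^ (d - k) * cnj (1 - z) ^ k = (-1) ^ k * (1 - z) ^ d * cnj z ^ k"
    using \<open>k \<le> d\<close> by (simp add: power_mult_distrib power_minus' power_add[symmetric])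
  also have "(1 - z) ^ d = (\<Sum>j\<le>d. of_nat (d choose j) * (- z) ^ j)"
    using binomial_ring[of "- z" 1 d] by (simp add: mult_ac)
  finally show ?thesis
    by (simp add: sum_distrib_left sum_distrib_right power_add power_minus' mult_ac)
qed

lemma hol_part_circle:
  assumes z: "norm z = 1" and "k \<le> d"
  shows "hol_part d k z + cnj (hol_part d (d - k) z)
    = (1 - z) ^ (d - k) * cnj (1 - z) ^ k + of_nat (d choose k)"
proof -
  define f where "f j = (-1) ^ (k + j) * of_nat (d choose j) * (z ^ j * cnj z ^ k)" for j
  have "f k = of_nat (d choose k)"
    using unit_circle_cnj_power[OF z, of k k] by (simp add: f_def minus_one_power_iff)
  then have "(1 - z) ^ (d - k) * cnj (1 - z) ^ k + of_nat (d choose k) = (\<Sum>j\<le>d. f j) + f k"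
    using one_minus_power_cnj_on_circle[OF z \<open>k \<le> d\<close>] by (simp add: f_def)
  also have "\<dots> = (\<Sum>i\<le>d - k. f (k + i)) + (\<Sum>i\<le>k. f (k - i))"
    by (rule sum_atMost_around[OF \<open>k \<le> d\<close>])
  also have "(\<Sum>i\<le>d - k. f (k + i)) = hol_part d k z"
    unfolding hol_part_def f_def
    by (intro sum.cong refl) (simp add: unit_circle_cnj_power[OF z] minus_one_power_iff)
  also have "(\<Sum>i\<le>k. f (k - i)) = cnj (hol_part d (d - k) z)"
    unfolding hol_part_def cnj_sum
  proof (intro sum.cong)
    fix i assume "i \<in> {..d - (d - k)}"
    then have "i \<le> k"
      using \<open>k \<le> d\<close> by simp
    have "cnj z ^ k * cnj (cnj z) ^ (k - i) = cnj z ^ i"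
      using unit_circle_cnj_power[of "cnj z" "k - i" k] z \<open>i \<le> k\<close> by simp
    moreover have "d - (k - i) = d - k + i"
      using \<open>i \<le> k\<close> \<open>k \<le> d\<close> by simp
    then have "d choose (d - k + i) = d choose (k - i)"
      using binomial_symmetric[of "k - i" d] \<open>k \<le> d\<close> by simp
    ultimately show "f (k - i) = cnj ((-1) ^ i * of_nat (d choose (d - k + i)) * z ^ i)"
      using \<open>i \<le> k\<close> by (simp add: f_def minus_one_power_iff mult_ac)
  qed (use \<open>k \<le> d\<close> in simp)
  finally show ?thesis by simp
qed

lemma hol_part_0: "hol_part d k 0 = of_nat (d choose k)"
  unfolding hol_part_def by (subst sum.atMost_shift) simp

lemma alternating_sum_choose_Suc:
  "(\<Sum>i\<le>m. (-1) ^ i * of_nat (Suc n choose (Suc k + i)) :: 'a::comm_ring_1)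
    = of_nat (n choose k) + (-1) ^ m * of_nat (n choose (Suc k + m))"
  by (induction m) (simp_all add: algebra_simps)

lemma hol_part_1:
  assumes "1 \<le> k" "k \<le> d"
  shows "hol_part d k 1 = of_nat (d - 1 choose (k - 1))"
proof -
  obtain n j where "d = Suc n" "k = Suc j"
    using assms by (cases d; cases k) auto
  then show ?thesis
    using assms alternating_sum_choose_Suc[where 'a = complex and m = "n - j" and n = n and k = j]
    by (simp add: hol_part_def del: binomial_Suc_Suc)
qed

lemma hol_part_deriv_0:
  assumes "k < d"
  shows "(hol_part d k has_field_derivative - of_nat (d choose Suc k)) (at 0)"
proof -
  have "(hol_part d k has_field_derivative
      (\<Sum>i\<le>d - k. of_nat i * 0 ^ (i - 1) * ((-1) ^ i * of_nat (d choose (k + i))))) (at 0)"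
    unfolding hol_part_def [abs_def] by (auto intro!: derivative_eq_intros)
  also have "(\<Sum>i\<le>d - k. of_nat i * (0::complex) ^ (i - 1) * ((-1) ^ i * of_nat (d choose (k + i))))
      = (\<Sum>i\<le>d - k. if i = 1 then - of_nat (d choose Suc k) else 0)"
    by (intro sum.cong refl) (auto simp: power_0_left)
  finally show ?thesis
    using assms by (simp add: Suc_le_eq)
qed

definition dz_coeff :: "nat \<Rightarrow> nat \<Rightarrow> nat" where
  "dz_coeff d k = k * (d - 1 choose Suc k)"

definition dzbar_coeff :: "nat \<Rightarrow> nat \<Rightarrow> nat" where
  "dzbar_coeff d k = k * (d - 1 choose k)"

lemma hol_part_jacobian_coeffs:
  assumes "1 \<le> k" "k < d"
  shows "of_nat (d - k) * (hol_part d k 0 - hol_part d k 1) - of_nat (d choose Suc k)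
      = of_nat (dz_coeff d k)"
    and "of_nat k * (hol_part d k 0 - hol_part d k 1) = of_nat (dzbar_coeff d k)"
proof -
  obtain n j where d: "d = Suc n" and k: "k = Suc j"
    using assms by (cases d; cases k) auto
  have diff: "hol_part d k 0 - hol_part d k 1 = of_nat (n choose k)"
    using assms by (simp add: hol_part_0 hol_part_1 d k)
  have nat_id: "(d - k) * (n choose k) = (d choose Suc k) + k * (n choose Suc k)"
  proof -
    have "(d - k) * (n choose k) = (n - k) * (n choose k) + (n choose k)"
      using assms by (simp add: d Suc_diff_le)
    also have "(n - k) * (n choose k) = Suc k * (n choose Suc k)"
      by (rule binomial_absorption_comp[symmetric])
    finally show ?thesis
      by (simp add: d)
  qed
  have "of_nat (d - k) * of_nat (n choose k) - of_nat (d choose Suc k)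
      = (of_nat (k * (n choose Suc k)) :: complex)"
    using arg_cong[OF nat_id, of "of_nat :: nat \<Rightarrow> complex"] by simp
  then show "of_nat (d - k) * (hol_part d k 0 - hol_part d k 1) - of_nat (d choose Suc k)
      = of_nat (dz_coeff d k)"
    unfolding diff by (simp add: dz_coeff_def d)
  show "of_nat k * (hol_part d k 0 - hol_part d k 1) = of_nat (dzbar_coeff d k)"
    unfolding diff by (simp add: dzbar_coeff_def d)
qed

lemma dz_coeff_product_neq:
  assumes "1 \<le> k" "k < d"
  shows "dz_coeff d k * dz_coeff d (d - k) \<noteq> dzbar_coeff d k * dzbar_coeff d (d - k)"
proof -
  obtain n where d: "d = Suc n"
    using assms by (cases d) auto
  have "0 < k * (d - k)"
    using assms by simp
  moreover have "(n choose Suc k) * (n choose Suc (Suc n - k)) < (n choose k) * (n choose (Suc n - k))"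
    using assms by (intro binomial_product_decreasing) (simp_all add: d)
  ultimately have "(k * (d - k)) * ((n choose Suc k) * (n choose Suc (Suc n - k)))
      < (k * (d - k)) * ((n choose k) * (n choose (Suc n - k)))"
    by simp
  then show ?thesis
    by (simp add: dz_coeff_def dzbar_coeff_def d mult_ac)
qed

section \<open>The model hypersurface and its discs\<close>

locale weighted_model =
  fixes M :: "'n::finite \<Rightarrow> nat" and d :: nat
    and \<alpha> :: "('n \<Rightarrow> nat) \<Rightarrow> ('n \<Rightarrow> nat) \<Rightarrow> complex"
  assumes M_pos: "\<forall>i. M i > 0"
    and no_harm: "\<forall>J K. (J = (\<lambda>_. 0) \<or> K = (\<lambda>_. 0)) \<longrightarrow> \<alpha> J K = 0"
begin

lemma le_wdeg: "J i \<le> wdeg M J"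
proof -
  have "J i \<le> M i * J i"
    using M_pos by (simp add: Suc_le_eq)
  also have "\<dots> \<le> wdeg M J"
    unfolding wdeg_def by (rule member_le_sum) auto
  finally show ?thesis .
qed

lemma wdeg_eq_0_iff: "wdeg M J = 0 \<longleftrightarrow> J = (\<lambda>_. 0)"
proof
  show "wdeg M J = 0 \<Longrightarrow> J = (\<lambda>_. 0)"
    by (intro ext) (metis le_wdeg le_zero_eq)
qed (simp add: wdeg_def)

lemma finite_wdeg_le: "finite {(J, K). wdeg M J + wdeg M K = d}"
proof (rule finite_subset)
  show "{(J, K). wdeg M J + wdeg M K = d} \<subseteq> (UNIV \<rightarrow>\<^sub>E {..d}) \<times> (UNIV \<rightarrow>\<^sub>E {..d})"
    using le_wdeg by (fastforce intro: le_trans)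
qed (intro finite_cartesian_product finite_PiE; simp)

definition dil :: "complex \<Rightarrow> complex^'n \<Rightarrow> complex^'n" where
  "dil c v = (\<chi> i. c ^ M i * v $ i)"

definition bideg :: "nat \<Rightarrow> complex^'n \<Rightarrow> complex" where
  "bideg k v = (\<Sum>(J, K)\<in>{(J, K). wdeg M J + wdeg M K = d \<and> wdeg M K = k}.
      \<alpha> J K * mono v J * mono (\<chi> i. cnj (v $ i)) K)"

definition bideg_sym :: "nat \<Rightarrow> complex^'n \<Rightarrow> complex" where
  "bideg_sym k v = bideg k v + cnj (bideg (d - k) v)"

lemma hdisc_eq_dil: "hdisc M v z = dil (1 - z) v"
  by (simp add: hdisc_def dil_def)

lemma mono_dil: "mono (dil c v) J = c ^ wdeg M J * mono v J"
proof -
  have "mono (dil c v) J = (\<Prod>i\<in>UNIV. c ^ (M i * J i)) * (\<Prod>i\<in>UNIV. v $ i ^ J i)"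
    by (simp add: mono_def dil_def power_mult_distrib power_mult prod.distrib)
  then show ?thesis
    by (simp add: wdeg_def mono_def power_sum)
qed

lemma bideg_dil: "bideg k (dil c v) = c ^ (d - k) * cnj c ^ k * bideg k v"
proof -
  have "(\<chi> i. cnj (dil c v $ i)) = dil (cnj c) (\<chi> i. cnj (v $ i))"
    by (simp add: dil_def vec_eq_iff)
  then show ?thesis
    unfolding bideg_def sum_distrib_left
    by (intro sum.cong refl) (auto simp: mono_dil)
qed

lemma bideg_sym_dil:
  assumes "k \<le> d"
  shows "bideg_sym k (dil c v) = c ^ (d - k) * cnj c ^ k * bideg_sym k v"
  using assms by (simp add: bideg_sym_def bideg_dil algebra_simps)

lemma bideg_sym_reflect: "k \<le> d \<Longrightarrow> bideg_sym (d - k) v = cnj (bideg_sym k v)"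
  by (simp add: bideg_sym_def)

lemma bideg_0: "bideg 0 v = 0" and bideg_d: "bideg d v = 0"
  using no_harm by (auto simp: bideg_def wdeg_eq_0_iff intro!: sum.neutral)

lemma bideg_sym_0: "bideg_sym 0 v = 0" and bideg_sym_d: "bideg_sym d v = 0"
  by (simp_all add: bideg_sym_def bideg_0 bideg_d)

lemma modelP_eq_sum_bideg: "modelP M d \<alpha> v = (\<Sum>k\<le>d. bideg k v)"
proof -
  define S where "S = {(J, K). wdeg M J + wdeg M K = d}"
  define f where "f x = \<alpha> (fst x) (snd x) * mono v (fst x) * mono (\<chi> i. cnj (v $ i)) (snd x)" for x
  have "modelP M d \<alpha> v = (\<Sum>k\<le>d. \<Sum>x\<in>{x \<in> S. wdeg M (snd x) = k}. f x)"
    unfolding modelP_def using finite_wdeg_le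
    by (subst sum.group) (auto simp: S_def f_def case_prod_beta)
  also have "\<dots> = (\<Sum>k\<le>d. bideg k v)"
    unfolding bideg_def case_prod_beta
    by (intro sum.cong refl arg_cong2[where f = sum]) (auto simp: S_def f_def)
  finally show ?thesis .
qed

lemma sum_bideg_sym: "(\<Sum>k\<le>d. bideg_sym k v) = modelP M d \<alpha> v + cnj (modelP M d \<alpha> v)"
proof -
  have "(\<Sum>k\<le>d. cnj (bideg (d - k) v)) = (\<Sum>k\<le>d. cnj (bideg k v))"
    using sum.atLeastAtMost_rev[of "\<lambda>k. cnj (bideg k v)" 0 d] by (simp add: atLeast0AtMost)
  then show ?thesis
    by (simp add: bideg_sym_def sum.distrib modelP_eq_sum_bideg)
qed

definition gdisc :: "complex^'n \<Rightarrow> complex \<Rightarrow> complex" where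
  "gdisc v z = (\<Sum>k\<le>d. bideg_sym k v * (hol_part d k z - hol_part d k 1))"

lemma Re_sum_bideg_sym_hol_part:
  assumes "norm z = 1"
  shows "Re (\<Sum>k\<le>d. bideg_sym k v * hol_part d k z)
    = Re (modelP M d \<alpha> (hdisc M v z)) + Re (\<Sum>k\<le>d. of_nat (d choose k) * bideg k v)"
proof -
  have "(\<Sum>k\<le>d. Re (cnj (bideg (d - k) v) * hol_part d k z))
      = (\<Sum>k\<le>d. Re (bideg k v * cnj (hol_part d (d - k) z)))"
    using sum.atLeastAtMost_rev[of "\<lambda>k. Re (cnj (bideg k v) * hol_part d (d - k) z)" 0 d]
    by (simp add: atLeast0AtMost)
  then have "Re (\<Sum>k\<le>d. bideg_sym k v * hol_part d k z)
      = Re (\<Sum>k\<le>d. bideg k v * (hol_part d k z + cnj (hol_part d (d - k) z)))"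
    by (simp add: bideg_sym_def algebra_simps sum.distrib)
  also have "\<dots> = Re (\<Sum>k\<le>d. bideg k v * ((1 - z) ^ (d - k) * cnj (1 - z) ^ k + of_nat (d choose k)))"
    using hol_part_circle[OF assms] by simp
  also have "\<dots> = Re (\<Sum>k\<le>d. bideg k (dil (1 - z) v)) + Re (\<Sum>k\<le>d. of_nat (d choose k) * bideg k v)"
    by (simp add: bideg_dil sum.distrib algebra_simps)
  finally show ?thesis
    by (simp add: hdisc_eq_dil modelP_eq_sum_bideg)
qed

lemma modelP_hdisc_1: "modelP M d \<alpha> (hdisc M v 1) = 0"
  by (auto simp: hdisc_eq_dil modelP_eq_sum_bideg bideg_dil bideg_0 bideg_d intro!: sum.neutral)

lemma Re_gdisc_circle:
  assumes "norm z = 1"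
  shows "Re (gdisc v z) = Re (modelP M d \<alpha> (hdisc M v z))"
  using Re_sum_bideg_sym_hol_part[OF assms] Re_sum_bideg_sym_hol_part[of 1]
  by (simp add: gdisc_def modelP_hdisc_1 right_diff_distrib sum_subtractf)

lemma gdisc_1: "gdisc v 1 = 0"
  by (simp add: gdisc_def)

lemma holomorphic_gdisc: "gdisc v holomorphic_on S"
  unfolding gdisc_def hol_part_def by (intro holomorphic_intros)

lemma poly_eq_gdisc:
  fixes g :: "complex^'n \<Rightarrow> complex poly"
  assumes g_one: "\<forall>v. poly (g v) 1 = 0"
    and g_bdry: "\<forall>v. \<forall>\<zeta>\<in>sphere 0 1. Re (poly (g v) \<zeta>) = Re (modelP M d \<alpha> (hdisc M v \<zeta>))"
    and "z \<in> ball 0 1"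
  shows "poly (g v) z = gdisc v z"
proof -
  have "poly (g v) z - gdisc v z = 0"
  proof (rule holomorphic_Re_zero_on_circle_imp_zero[where p = "\<lambda>z. poly (g v) z - gdisc v z"])
    show "(\<lambda>z. poly (g v) z - gdisc v z) holomorphic_on UNIV"
      by (intro holomorphic_intros holomorphic_gdisc)
  qed (use assms in \<open>simp_all add: Re_gdisc_circle gdisc_1\<close>)
  then show ?thesis by simp
qed

definition disc_map :: "(complex^'n) \<times> complex \<Rightarrow> (complex^'n) \<times> complex" where
  "disc_map p = (hdisc M (fst p) (snd p), gdisc (fst p) (snd p))"

definition jac_coeff :: "(nat \<Rightarrow> nat) \<Rightarrow> complex^'n \<Rightarrow> complex" where
  "jac_coeff w v = (\<Sum>k\<le>d. of_nat (w k) * bideg_sym k v)"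

lemma disc_map_differentiable: "\<exists>D. (disc_map has_derivative D) (at p)"
proof -
  have "\<exists>D1. ((\<lambda>p. hdisc M (fst p) (snd p)) has_derivative D1) (at p)"
    unfolding hdisc_def by (rule exI, (rule has_derivative_vec_lambda derivative_intros)+)
  moreover have "\<exists>D2. ((\<lambda>p. gdisc (fst p) (snd p)) has_derivative D2) (at p)"
    unfolding gdisc_def bideg_sym_def bideg_def mono_def hol_part_def case_prod_beta vec_lambda_beta
    by (rule exI, (rule derivative_intros)+)
  ultimately obtain D1 D2
    where "((\<lambda>p. hdisc M (fst p) (snd p)) has_derivative D1) (at p)"
      and "((\<lambda>p. gdisc (fst p) (snd p)) has_derivative D2) (at p)"
    by blast
  then have "(disc_map has_derivative (\<lambda>h. (D1 h, D2 h))) (at p)"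
    unfolding disc_map_def [abs_def] by (rule has_derivative_Pair)
  then show ?thesis by blast
qed

lemma continuous_on_disc_map: "continuous_on UNIV disc_map"
  using disc_map_differentiable has_derivative_continuous
  by (blast intro: continuous_at_imp_continuous_on)

lemma disc_map_deriv_horizontal:
  assumes "(disc_map has_derivative D) (at (v0, 0))"
  shows "fst (D (a, 0)) = a"
proof (rule has_derivative_along_curve[where \<Phi> = "\<lambda>p. fst (disc_map p)" and \<Phi>' = "\<lambda>h. fst (D h)"
      and \<gamma> = "\<lambda>s. (v0 + s *\<^sub>R a, 0)" and w = "(a, 0)"])
  show "((\<lambda>p. fst (disc_map p)) has_derivative (\<lambda>h. fst (D h))) (at ((\<lambda>s. (v0 + s *\<^sub>R a, 0)) 0))"
    using bounded_linear.has_derivative[OF bounded_linear_fst assms] by simp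
  show "((\<lambda>s. (v0 + s *\<^sub>R a, 0::complex)) has_vector_derivative (a, 0)) (at 0)"
    by (auto intro!: derivative_eq_intros)
  have "(\<lambda>p. fst (disc_map p)) \<circ> (\<lambda>s. (v0 + s *\<^sub>R a, 0)) = (\<lambda>s. v0 + s *\<^sub>R a)"
    by (simp add: disc_map_def hdisc_def o_def vec_eq_iff fun_eq_iff)
  then show "((\<lambda>p. fst (disc_map p)) \<circ> (\<lambda>s. (v0 + s *\<^sub>R a, 0)) has_vector_derivative a) (at 0)"
    by (auto intro!: derivative_eq_intros)
qed

lemma jacobian_sum_eq:
  "(\<Sum>k\<le>d. bideg_sym k v * ((of_nat (d - k) * e + of_nat k * cnj e) * (hol_part d k 0 - hol_part d k 1)
      + deriv (hol_part d k) 0 * e))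
    = jac_coeff (dz_coeff d) v * e + jac_coeff (dzbar_coeff d) v * cnj e"
  unfolding jac_coeff_def sum_distrib_right sum.distrib[symmetric]
proof (intro sum.cong refl)
  fix k assume "k \<in> {..d}"
  show "bideg_sym k v * ((of_nat (d - k) * e + of_nat k * cnj e) * (hol_part d k 0 - hol_part d k 1)
      + deriv (hol_part d k) 0 * e)
    = of_nat (dz_coeff d k) * bideg_sym k v * e + of_nat (dzbar_coeff d k) * bideg_sym k v * cnj e"
  proof (cases "1 \<le> k \<and> k < d")
    case True
    then have "deriv (hol_part d k) 0 = - of_nat (d choose Suc k)"
      using hol_part_deriv_0 DERIV_imp_deriv by blast
    then show ?thesis
      using hol_part_jacobian_coeffs[of k d] True by (simp add: algebra_simps)
  next
    case False
    with \<open>k \<in> {..d}\<close> have "k = 0 \<or> k = d" by auto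
    then show ?thesis by (auto simp: bideg_sym_0 bideg_sym_d)
  qed
qed

lemma gdisc_dil_exp_deriv:
  "((\<lambda>s. gdisc (dil (exp (of_real s * e)) v) (of_real s * e)) has_vector_derivative
      jac_coeff (dz_coeff d) v * e + jac_coeff (dzbar_coeff d) v * cnj e) (at 0)"
proof -
  define Q where "Q t = (\<Sum>k\<le>d. bideg_sym k v * exp (t * e) ^ (d - k) * exp (t * cnj e) ^ k
      * (hol_part d k (t * e) - hol_part d k 1))" for t
  have Q: "gdisc (dil (exp (of_real s * e)) v) (of_real s * e) = Q (of_real s)" for s
    unfolding gdisc_def Q_def
    by (intro sum.cong refl) (simp add: bideg_sym_dil exp_cnj mult_ac)
  have H: "((\<lambda>t. hol_part d k (t * e)) has_field_derivative deriv (hol_part d k) 0 * e) (at 0)"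
    for k
  proof (rule DERIV_chain2[where f = "hol_part d k"])
    have "hol_part d k holomorphic_on UNIV"
      unfolding hol_part_def [abs_def] by (intro holomorphic_intros)
    then show "(hol_part d k has_field_derivative deriv (hol_part d k) 0) (at (0 * e))"
      by (simp add: DERIV_deriv_iff_field_differentiable holomorphic_on_imp_differentiable_at)
  qed (auto intro!: derivative_eq_intros)
  have "(Q has_field_derivative (\<Sum>k\<le>d. bideg_sym k v * ((of_nat (d - k) * e + of_nat k * cnj e)
      * (hol_part d k 0 - hol_part d k 1) + deriv (hol_part d k) 0 * e))) (at 0)"
    unfolding Q_def [abs_def]
    by (auto intro!: derivative_eq_intros H simp: algebra_simps)
  then have "(Q has_field_derivative jac_coeff (dz_coeff d) v * e + jac_coeff (dzbar_coeff d) v * cnj e)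
      (at (of_real 0))"
    unfolding jacobian_sum_eq by simp
  then show ?thesis
    unfolding Q by (rule has_vector_derivative_real_field)
qed

lemma dil_exp_deriv:
  "((\<lambda>s. dil (exp (of_real s * e)) v) has_vector_derivative (\<chi> i. of_nat (M i) * e * v $ i)) (at 0)"
  unfolding dil_def
proof (intro has_vector_derivative_vec_lambda)
  fix i
  have "((\<lambda>t. exp (t * e) ^ M i * v $ i) has_field_derivative of_nat (M i) * e * v $ i) (at (of_real 0))"
    by (auto intro!: derivative_eq_intros)
  then show "((\<lambda>s. exp (of_real s * e) ^ M i * v $ i) has_vector_derivative of_nat (M i) * e * v $ i) (at 0)"
    by (rule has_vector_derivative_real_field)
qed

lemma hdisc_dil_exp_deriv:
  "((\<lambda>s. hdisc M (dil (exp (of_real s * e)) v) (of_real s * e)) has_vector_derivative 0) (at 0)"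
proof -
  have "((\<lambda>s. \<chi> i. (1 - of_real s * e) ^ M i * (exp (of_real s * e) ^ M i * v $ i))
      has_vector_derivative (\<chi> i. 0)) (at 0)"
  proof (intro has_vector_derivative_vec_lambda)
    fix i
    have "((\<lambda>t. (1 - t * e) ^ M i * (exp (t * e) ^ M i * v $ i)) has_field_derivative 0) (at (of_real 0))"
      by (auto intro!: derivative_eq_intros simp: algebra_simps)
    then show "((\<lambda>s. (1 - of_real s * e) ^ M i * (exp (of_real s * e) ^ M i * v $ i))
        has_vector_derivative 0) (at 0)"
      by (rule has_vector_derivative_real_field)
  qed
  then show ?thesis
    by (simp add: hdisc_def dil_def zero_vec_def)
qed

lemma disc_map_deriv_twisted:
  assumes "(disc_map has_derivative D) (at (v, 0))"
  shows "D ((\<chi> i. of_nat (M i) * e * v $ i), e)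
    = (0, jac_coeff (dz_coeff d) v * e + jac_coeff (dzbar_coeff d) v * cnj e)"
proof (rule has_derivative_along_curve[where \<Phi> = disc_map and \<Phi>' = D
      and \<gamma> = "\<lambda>s. (dil (exp (of_real s * e)) v, of_real s * e)"])
  show "(disc_map has_derivative D) (at (dil (exp (of_real 0 * e)) v, of_real 0 * e))"
    using assms by (simp add: dil_def vec_eq_iff)
  show "((\<lambda>s. (dil (exp (of_real s * e)) v, of_real s * e)) has_vector_derivative
      ((\<chi> i. of_nat (M i) * e * v $ i), e)) (at 0)"
    using has_vector_derivative_real_field[of "\<lambda>t. t * e" e 0]
    by (intro has_vector_derivative_Pair dil_exp_deriv) (auto intro!: derivative_eq_intros)
  show "(disc_map \<circ> (\<lambda>s. (dil (exp (of_real s * e)) v, of_real s * e)) has_vector_derivative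
      (0, jac_coeff (dz_coeff d) v * e + jac_coeff (dzbar_coeff d) v * cnj e)) (at 0)"
    unfolding disc_map_def o_def fst_conv snd_conv
    by (intro has_vector_derivative_Pair hdisc_dil_exp_deriv gdisc_dil_exp_deriv)
qed

lemma surj_disc_map_derivative:
  assumes D: "(disc_map has_derivative D) (at (v, 0))"
    and unbalanced: "norm (jac_coeff (dz_coeff d) v) \<noteq> norm (jac_coeff (dzbar_coeff d) v)"
  shows "surj D"
  unfolding surj_def
proof
  fix q :: "(complex^'n) \<times> complex"
  obtain e where e: "jac_coeff (dz_coeff d) v * e + jac_coeff (dzbar_coeff d) v * cnj e
      = snd q - snd (D (fst q, 0))"
    using conj_linear_surj[OF unbalanced] by blast
  have "D ((fst q, 0) + ((\<chi> i. of_nat (M i) * e * v $ i), e))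
      = D (fst q, 0) + D ((\<chi> i. of_nat (M i) * e * v $ i), e)"
    using linear_add[OF has_derivative_linear[OF D]] by blast
  also have "\<dots> = q"
    using disc_map_deriv_horizontal[OF D, of "fst q"] disc_map_deriv_twisted[OF D, of e] e
    by (simp add: prod_eq_iff)
  finally show "\<exists>p. q = D p"
    by metis
qed

lemma norm_jac_coeff_dil:
  assumes "norm c = 1"
  shows "norm (jac_coeff w (dil c v)) = norm (\<Sum>k\<le>d. of_nat (w k) * bideg_sym k v * (cnj c ^ 2) ^ k)"
proof -
  have "jac_coeff w (dil c v) = c ^ d * (\<Sum>k\<le>d. of_nat (w k) * bideg_sym k v * (cnj c ^ 2) ^ k)"
    unfolding jac_coeff_def sum_distrib_left
  proof (intro sum.cong refl)
    fix k assume "k \<in> {..d}"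
    then have "c ^ (d - k) * cnj c ^ k = c ^ d * (cnj c ^ 2) ^ k"
      using unit_circle_cnj_power[OF assms, of k d]
      by (simp add: power_mult[symmetric] mult_2 power_add mult.assoc[symmetric])
    with \<open>k \<in> {..d}\<close> show "of_nat (w k) * bideg_sym k (dil c v)
        = c ^ d * (of_nat (w k) * bideg_sym k v * (cnj c ^ 2) ^ k)"
      by (simp add: bideg_sym_dil mult_ac)
  qed
  then show ?thesis
    using assms by (simp add: norm_mult norm_power)
qed

lemma bideg_sym_extreme_index:
  assumes P_real: "\<forall>z. Im (modelP M d \<alpha> z) = 0" and "modelP M d \<alpha> v \<noteq> 0"
  obtains k where "1 \<le> k" "k < d" "bideg_sym k v \<noteq> 0" "bideg_sym (d - k) v \<noteq> 0"
    "\<And>j. j \<le> d \<Longrightarrow> bideg_sym j v \<noteq> 0 \<Longrightarrow> k \<le> j \<and> j \<le> d - k"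
proof -
  define Z where "Z = {j. j \<le> d \<and> bideg_sym j v \<noteq> 0}"
  have "(\<Sum>j\<le>d. bideg_sym j v) \<noteq> 0"
    using P_real \<open>modelP M d \<alpha> v \<noteq> 0\<close>
    by (simp add: sum_bideg_sym complex_eq_iff)
  then have "Z \<noteq> {}" "finite Z"
    by (auto simp: Z_def intro: sum.neutral)
  define k where "k = Min Z"
  have "k \<in> Z" and k_min: "\<And>j. j \<in> Z \<Longrightarrow> k \<le> j"
    using \<open>Z \<noteq> {}\<close> \<open>finite Z\<close> by (simp_all add: k_def)
  have Z_reflect: "d - j \<in> Z" if "j \<in> Z" for j
    using that by (auto simp: Z_def bideg_sym_reflect)
  show thesis
  proof
    show "1 \<le> k"
      using \<open>k \<in> Z\<close> bideg_sym_0 by (cases k) (auto simp: Z_def)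
    show "k < d"
      using \<open>k \<in> Z\<close> bideg_sym_d by (auto simp: Z_def le_less)
    show "bideg_sym k v \<noteq> 0" "bideg_sym (d - k) v \<noteq> 0"
      using \<open>k \<in> Z\<close> Z_reflect[OF \<open>k \<in> Z\<close>] by (simp_all add: Z_def)
    fix j assume "j \<le> d" "bideg_sym j v \<noteq> 0"
    then have "j \<in> Z" by (simp add: Z_def)
    then show "k \<le> j \<and> j \<le> d - k"
      using k_min Z_reflect[OF \<open>j \<in> Z\<close>] \<open>j \<le> d\<close> by fastforce
  qed
qed

lemma exists_unbalanced_point:
  assumes P_real: "\<forall>z. Im (modelP M d \<alpha> z) = 0" and "modelP M d \<alpha> v \<noteq> 0"
  shows "\<exists>u. norm (jac_coeff (dz_coeff d) u) \<noteq> norm (jac_coeff (dzbar_coeff d) u)"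
proof (rule ccontr)
  assume "\<not> ?thesis"
  then have balanced: "norm (jac_coeff (dz_coeff d) u) = norm (jac_coeff (dzbar_coeff d) u)" for u
    by blast
  obtain k where k: "1 \<le> k" "k < d" "bideg_sym k v \<noteq> 0" "bideg_sym (d - k) v \<noteq> 0"
    and supp: "\<And>j. j \<le> d \<Longrightarrow> bideg_sym j v \<noteq> 0 \<Longrightarrow> k \<le> j \<and> j \<le> d - k"
    using bideg_sym_extreme_index[OF assms] by blast
  define a where "a j = of_nat (dz_coeff d j) * bideg_sym j v" for j
  define b where "b j = of_nat (dzbar_coeff d j) * bideg_sym j v" for j
  have "a (d - k) * cnj (a k) = b (d - k) * cnj (b k)"
  proof (rule extreme_coeffs_eq_if_norms_eq_on_circle)
    fix z :: complex assume "norm z = 1"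
    define c where "c = cnj (csqrt z)"
    have "norm c = 1" "cnj c ^ 2 = z"
      using \<open>norm z = 1\<close> by (simp_all add: c_def)
    then show "norm (\<Sum>j\<le>d. a j * z ^ j) = norm (\<Sum>j\<le>d. b j * z ^ j)"
      using norm_jac_coeff_dil[of c] balanced[of "dil c v"] by (simp add: a_def b_def)
  qed (use k supp in \<open>auto simp: a_def b_def\<close>)
  then have "of_nat (dz_coeff d (d - k) * dz_coeff d k) = (of_nat (dzbar_coeff d (d - k) * dzbar_coeff d k) :: complex)"
    using k by (simp add: a_def b_def mult_ac)
  then show False
    using dz_coeff_product_neq[OF k(1,2)] by (simp only: of_nat_eq_iff mult.commute)
qed

end

theorem mainTheorem8:
  fixes M :: "'n::finite \<Rightarrow> nat" and d :: nat
    and \<alpha> :: "('n \<Rightarrow> nat) \<Rightarrow> ('n \<Rightarrow> nat) \<Rightarrow> complex"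
    and g :: "complex^'n \<Rightarrow> complex poly"
  assumes M_pos: "\<forall>i. M i > 0"
    and P_real: "\<forall>z. Im (modelP M d \<alpha> z) = 0"
    and no_harm: "\<forall>J K. (J = (\<lambda>_. 0) \<or> K = (\<lambda>_. 0)) \<longrightarrow> \<alpha> J K = 0"
    and P_nonzero: "\<exists>z. modelP M d \<alpha> z \<noteq> 0"
    and g_one: "\<forall>v. poly (g v) 1 = 0"
    and g_bdry: "\<forall>v. \<forall>\<zeta>\<in>sphere 0 1. Re (poly (g v) \<zeta>) = Re (modelP M d \<alpha> (hdisc M v \<zeta>))"
  shows "\<exists>U :: ((complex^'n) \<times> complex) set. open U \<and> U \<noteq> {} \<and>
           U \<subseteq> (\<Union>v. (\<lambda>\<zeta>. (hdisc M v \<zeta>, poly (g v) \<zeta>)) ` ball 0 1)"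
proof -
  interpret weighted_model M d \<alpha>
    using M_pos no_harm by unfold_locales
  obtain v where unbalanced: "norm (jac_coeff (dz_coeff d) v) \<noteq> norm (jac_coeff (dzbar_coeff d) v)"
    using exists_unbalanced_point P_real P_nonzero by blast
  obtain D where D: "(disc_map has_derivative D) (at (v, 0))"
    using disc_map_differentiable by blast
  define T where "T = (UNIV :: (complex^'n) set) \<times> ball (0::complex) 1"
  have "disc_map (v, 0) \<in> interior (disc_map ` T)"
    using surj_disc_map_derivative[OF D unbalanced]
    by (intro interior_image_surj_derivative[OF continuous_on_disc_map D])
      (simp_all add: T_def interior_open open_Times)
  moreover have "disc_map ` T \<subseteq> (\<Union>v. (\<lambda>\<zeta>. (hdisc M v \<zeta>, poly (g v) \<zeta>)) ` ball 0 1)"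
    using poly_eq_gdisc[OF g_one g_bdry] by (force simp: T_def disc_map_def)
  ultimately show ?thesis
    by (intro exI[of _ "interior (disc_map ` T)"]) (auto dest: subsetD[OF interior_subset])
qed

end
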